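(* Let $a,b\in\mathbb R$, $\sigma\in(0,1]$, $t\in[0,1]$, and let $\mu=(1-t)\gamma_{a,\sigma}+t\gamma_{b,\sigma}$. Suppose \[ \min(t,1-t)\ge2\exp\Big(-\frac{(b-a)^2}{32}\Big). \] Then for every $p\ge1$, \[ \inf_{m\in\mathbb R}\mathrm W_p^p(\mu,\gamma_{m,1})\ge\min(t,1-t)\,\frac{|b-a|^p}{4^{p+1}}. \]
   Context: On $\mathbb R$, $\gamma_{a,s}$ denotes the Gaussian measure with mean $a$ and variance $s$. $\mathrm W_p(\mu,\nu)=\inf\mathbb E[|X-Y|^p]^{1/p}$, the infimum over all couplings $(X,Y)$ of $(\mu,\nu)$. *)

theory Defs
  imports "HOL-Probability.Probability"
begin

definition gauss :: "real \<Rightarrow> real \<Rightarrow> real measure" where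
  "gauss a s = density lborel (normal_density a (sqrt s))"

definition mixture :: "real \<Rightarrow> 'a measure \<Rightarrow> 'a measure \<Rightarrow> 'a measure" where
  "mixture t M N = measure_of (space M) (sets M)
     (\<lambda>A. ennreal (1 - t) * emeasure M A + ennreal t * emeasure N A)"

definition couplings :: "real measure \<Rightarrow> real measure \<Rightarrow> (real \<times> real) measure set" where
  "couplings \<mu> \<nu> = {\<pi>. prob_space \<pi> \<and> sets \<pi> = sets (borel \<Otimes>\<^sub>M borel)
      \<and> distr \<pi> borel fst = \<mu> \<and> distr \<pi> borel snd = \<nu>}"

definition Wpp :: "real \<Rightarrow> real measure \<Rightarrow> real measure \<Rightarrow> ennreal" where
  "Wpp p \<mu> \<nu> = (INF \<pi>\<in>couplings \<mu> \<nu>. \<integral>\<^sup>+ z. ennreal (\<bar>fst z - snd z\<bar> powr p) \<partial>\<pi>)"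

end

theory Submission
  imports Defs
begin

text \<open>
  Put \<open>r = \<bar>b - a\<bar> / 4\<close>. Whatever the mean \<open>m\<close>, one of the two components, centred at \<open>c\<close>
  with weight \<open>w \<ge> min t (1 - t)\<close>, satisfies \<open>\<bar>m - c\<bar> \<ge> 2 r\<close>. By symmetry it gives the mixture mass at least
  \<open>w / 2\<close> on the closed half-line at \<open>c\<close> pointing away from \<open>m\<close>, whereas by the Gaussian
  tail bound \<open>gauss m 1\<close> puts mass at most \<open>exp (- r\<^sup>2 / 2) / 2 \<le> w / 4\<close> within distance \<open>r\<close>
  of that half-line. So every coupling moves mass at least \<open>w / 4\<close> over a distance at least
  \<open>r\<close>, which costs at least \<open>w r\<^sup>p / 4\<close>.
\<close>

lemma prob_space_gauss: "0 < s \<Longrightarrow> prob_space (gauss a s)"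
  unfolding gauss_def by (rule prob_space_normal_density) simp

lemma sets_gauss [simp, measurable_cong]: "sets (gauss a s) = sets borel"
  unfolding gauss_def by simp

lemma space_gauss [simp]: "space (gauss a s) = UNIV"
  unfolding gauss_def by simp

lemma emeasure_gauss:
  "A \<in> sets borel \<Longrightarrow>
    emeasure (gauss a s) A = (\<integral>\<^sup>+x. ennreal (normal_density a (sqrt s) x) * indicator A x \<partial>lborel)"
  unfolding gauss_def by (simp add: emeasure_density)

lemma distr_gauss_reflect: "distr (gauss a s) borel (\<lambda>x. 2 * a - x) = gauss a s"
proof (rule measure_eqI)
  fix A :: "real set" assume "A \<in> sets (distr (gauss a s) borel (\<lambda>x. 2 * a - x))"
  then have [measurable]: "A \<in> sets borel" by simp
  have reflected: "(\<lambda>x. 2 * a - x) -` A \<in> sets borel"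
    by (rule measurable_sets_borel[where M = borel]) auto
  have "emeasure (distr (gauss a s) borel (\<lambda>x. 2 * a - x)) A
      = (\<integral>\<^sup>+x. ennreal (normal_density a (sqrt s) x) * indicator A (2 * a - x) \<partial>lborel)"
    by (simp add: emeasure_distr, subst emeasure_gauss)
       (auto intro!: nn_integral_cong split: split_indicator simp: reflected)
  also have "\<dots> = (\<integral>\<^sup>+x. ennreal (normal_density a (sqrt s) (2 * a - x)) * indicator A x \<partial>lborel)"
    by (subst nn_integral_real_affine[where c = "-1" and t = "2 * a"]) auto
  also have "\<dots> = emeasure (gauss a s) A"
    by (simp add: emeasure_gauss normal_density_def power2_commute)
  finally show "emeasure (distr (gauss a s) borel (\<lambda>x. 2 * a - x)) A = emeasure (gauss a s) A" .
qed simp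

lemma measure_gauss_reflect:
  "A \<in> sets borel \<Longrightarrow> measure (gauss a s) ((\<lambda>x. 2 * a - x) -` A) = measure (gauss a s) A"
  by (subst (2) distr_gauss_reflect[symmetric]) (simp add: measure_distr)

lemma
  assumes "0 < s"
  shows measure_gauss_atMost_center: "1/2 \<le> measure (gauss a s) {..a}"
    and measure_gauss_atLeast_center: "1/2 \<le> measure (gauss a s) {a..}"
    and measure_gauss_greaterThan_center: "measure (gauss a s) {a<..} \<le> 1/2"
proof -
  interpret prob_space "gauss a s" using assms by (rule prob_space_gauss)
  have "(\<lambda>x. 2 * a - x) -` {a<..} = {..<a}" and "(\<lambda>x. 2 * a - x) -` {a..} = {..a}" by auto
  then have reflect: "prob {a<..} = prob {..<a}" "prob {a..} = prob {..a}"
    using measure_gauss_reflect[of "{a<..}" a s] measure_gauss_reflect[of "{a..}" a s] by auto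
  have "UNIV - {..a} = {a<..}" by auto
  then have "prob {a<..} = 1 - prob {..a}"
    using prob_compl[of "{..a}"] by simp
  moreover have "prob {..<a} \<le> prob {..a}" by (intro finite_measure_mono) auto
  ultimately show "1/2 \<le> prob {..a}" "1/2 \<le> prob {a..}" "prob {a<..} \<le> 1/2"
    using reflect by linarith+
qed

lemma normal_density_shift_le:
  assumes "0 \<le> r" "\<mu> \<le> x"
  shows "normal_density \<mu> \<sigma> (x + r) \<le> exp (- r\<^sup>2 / (2 * \<sigma>\<^sup>2)) * normal_density \<mu> \<sigma> x"
proof -
  have "0 \<le> r * (x - \<mu>)"
    using assms by simp
  then have "r\<^sup>2 + (x - \<mu>)\<^sup>2 \<le> (x + r - \<mu>)\<^sup>2"
    by (simp add: power2_eq_square algebra_simps)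
  then have "(r\<^sup>2 + (x - \<mu>)\<^sup>2) / (2 * \<sigma>\<^sup>2) \<le> (x + r - \<mu>)\<^sup>2 / (2 * \<sigma>\<^sup>2)"
    by (rule divide_right_mono) simp
  then have "- (x + r - \<mu>)\<^sup>2 / (2 * \<sigma>\<^sup>2) \<le> - r\<^sup>2 / (2 * \<sigma>\<^sup>2) + - (x - \<mu>)\<^sup>2 / (2 * \<sigma>\<^sup>2)"
    by (simp add: add_divide_distrib)
  then have "exp (- (x + r - \<mu>)\<^sup>2 / (2 * \<sigma>\<^sup>2)) \<le> exp (- r\<^sup>2 / (2 * \<sigma>\<^sup>2)) * exp (- (x - \<mu>)\<^sup>2 / (2 * \<sigma>\<^sup>2))"
    by (simp add: exp_add[symmetric])
  then show ?thesis
    by (simp add: normal_density_def mult.left_commute divide_right_mono)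
qed

lemma measure_gauss_upper_tail:
  assumes "0 < s" "0 \<le> r"
  shows "measure (gauss m s) {m + r<..} \<le> exp (- r\<^sup>2 / (2 * s)) / 2"
proof -
  interpret prob_space "gauss m s" using assms(1) by (rule prob_space_gauss)
  define e where "e = exp (- r\<^sup>2 / (2 * s))"
  let ?\<phi> = "normal_density m (sqrt s)"
  have "ennreal (prob {m + r<..}) = (\<integral>\<^sup>+x. ennreal (?\<phi> x) * indicator {m + r<..} x \<partial>lborel)"
    by (simp add: emeasure_gauss emeasure_eq_measure[symmetric])
  also have "\<dots> = (\<integral>\<^sup>+x. ennreal (?\<phi> (x + r)) * indicator {m<..} x \<partial>lborel)"
    by (subst nn_integral_real_affine[where c = 1 and t = r])
       (auto intro!: nn_integral_cong simp: add.commute split: split_indicator)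
  also have "\<dots> \<le> (\<integral>\<^sup>+x. ennreal e * (ennreal (?\<phi> x) * indicator {m<..} x) \<partial>lborel)"
    using normal_density_shift_le[OF assms(2), of m _ "sqrt s"] assms(1)
    by (intro nn_integral_mono) (auto simp: e_def ennreal_mult[symmetric] ennreal_leI split: split_indicator)
  also have "\<dots> = ennreal (e * prob {m<..})"
    by (simp add: nn_integral_cmult emeasure_gauss[symmetric] emeasure_eq_measure e_def ennreal_mult)
  finally have "prob {m + r<..} \<le> e * prob {m<..}"
    by (simp add: e_def ennreal_le_iff)
  also have "\<dots> \<le> e / 2"
    using measure_gauss_greaterThan_center[OF assms(1), of m] by (simp add: e_def)
  finally show ?thesis unfolding e_def .
qed

lemma measure_gauss_lower_tail:
  assumes "0 < s" "0 \<le> r"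
  shows "measure (gauss m s) {..<m - r} \<le> exp (- r\<^sup>2 / (2 * s)) / 2"
proof -
  have "(\<lambda>x. 2 * m - x) -` {m + r<..} = {..<m - r}" by auto
  then show ?thesis
    using measure_gauss_reflect[of "{m + r<..}" m s] measure_gauss_upper_tail[OF assms] by simp
qed

lemma emeasure_mixture:
  assumes "sets N = sets M" "A \<in> sets M"
  shows "emeasure (mixture t M N) A = ennreal (1 - t) * emeasure M A + ennreal t * emeasure N A"
  unfolding mixture_def
proof (rule emeasure_measure_of_sigma)
  show "countably_additive (sets M) (\<lambda>A. ennreal (1 - t) * emeasure M A + ennreal t * emeasure N A)"
  proof (rule countably_additiveI)
    fix B :: "nat \<Rightarrow> _"
    assume B: "range B \<subseteq> sets M" "disjoint_family B" "\<Union> (range B) \<in> sets M"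
    then have "range B \<subseteq> sets N" using assms(1) by simp
    with B show "(\<Sum>i. ennreal (1 - t) * emeasure M (B i) + ennreal t * emeasure N (B i)) =
      ennreal (1 - t) * emeasure M (\<Union> (range B)) + ennreal t * emeasure N (\<Union> (range B))"
      by (simp add: suminf_add[symmetric] ennreal_suminf_cmult suminf_emeasure)
  qed
qed (auto simp: positive_def sets.sigma_algebra_axioms assms(2))

lemma measure_mixture:
  assumes "prob_space M" "prob_space N" "sets N = sets M" "A \<in> sets M" "0 \<le> t" "t \<le> 1"
  shows "measure (mixture t M N) A = (1 - t) * measure M A + t * measure N A"
proof -
  interpret M: prob_space M by fact
  interpret N: prob_space N by fact
  have "emeasure (mixture t M N) A = ennreal ((1 - t) * measure M A + t * measure N A)"
    using emeasure_mixture[OF assms(3,4), of t] assms(5,6)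
    by (simp add: M.emeasure_eq_measure N.emeasure_eq_measure ennreal_mult ennreal_plus)
  then show ?thesis
    using assms(5,6) by (simp add: measure_def[of "mixture t M N"] del: ennreal_plus)
qed

lemma
  assumes "prob_space M" "prob_space N" "sets N = sets M" "A \<in> sets M" "0 \<le> t" "t \<le> 1"
  shows measure_mixture_ge_left: "(1 - t) * measure M A \<le> measure (mixture t M N) A"
    and measure_mixture_ge_right: "t * measure N A \<le> measure (mixture t M N) A"
  using measure_mixture[OF assms] assms(5,6) by (simp_all add: add_increasing add_increasing2)

lemma coupling_measure_Times_ge:
  assumes "\<pi> \<in> couplings \<mu> \<nu>" "A \<in> sets borel" "B \<in> sets borel"
  shows "measure \<mu> A - measure \<nu> (- B) \<le> measure \<pi> (A \<times> B)"
proof -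
  have "prob_space \<pi>" and sets_\<pi>: "sets \<pi> = sets (borel \<Otimes>\<^sub>M borel)"
    and \<mu>: "\<mu> = distr \<pi> borel fst" and \<nu>: "\<nu> = distr \<pi> borel snd"
    using assms(1) unfolding couplings_def by auto
  interpret prob_space \<pi> by fact
  have [simp]: "space \<pi> = UNIV"
    using sets_eq_imp_space_eq[OF sets_\<pi>] by (simp add: space_pair_measure)
  have [measurable]: "fst \<in> \<pi> \<rightarrow>\<^sub>M borel" "snd \<in> \<pi> \<rightarrow>\<^sub>M borel"
    using measurable_cong_sets[OF sets_\<pi> refl] by auto
  have events: "A \<times> B \<in> events" "UNIV \<times> - B \<in> events"
    unfolding sets_\<pi> using assms(2,3) by (auto intro!: pair_measureI)
  have "measure \<mu> A = prob (A \<times> UNIV)"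
    unfolding \<mu> using assms(2) by (simp add: measure_distr vimage_fst)
  also have "\<dots> \<le> prob (A \<times> B \<union> UNIV \<times> - B)"
    using events by (intro finite_measure_mono) auto
  also have "\<dots> \<le> prob (A \<times> B) + prob (UNIV \<times> - B)"
    using events by (rule measure_subadditive) (simp_all add: emeasure_eq_measure)
  also have "prob (UNIV \<times> - B) = measure \<nu> (- B)"
    unfolding \<nu> using assms(3) by (simp add: measure_distr vimage_snd)
  finally show ?thesis by simp
qed

lemma Wpp_ge_separated_sets:
  assumes "A \<in> sets borel" "B \<in> sets borel" "\<And>x y. x \<in> A \<Longrightarrow> y \<in> B \<Longrightarrow> r \<le> \<bar>x - y\<bar>"
    and "0 \<le> r" "0 \<le> p"
  shows "ennreal (r powr p * (measure \<mu> A - measure \<nu> (- B))) \<le> Wpp p \<mu> \<nu>"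
  unfolding Wpp_def
proof (rule INF_greatest)
  fix \<pi> assume \<pi>: "\<pi> \<in> couplings \<mu> \<nu>"
  then have "prob_space \<pi>" and sets_\<pi>: "sets \<pi> = sets (borel \<Otimes>\<^sub>M borel)"
    unfolding couplings_def by auto
  interpret prob_space \<pi> by fact
  have AB: "A \<times> B \<in> sets \<pi>" using sets_\<pi> assms(1,2) by simp
  have "ennreal (r powr p * (measure \<mu> A - measure \<nu> (- B))) \<le> ennreal (r powr p * prob (A \<times> B))"
    using coupling_measure_Times_ge[OF \<pi> assms(1,2)] by (intro ennreal_leI mult_left_mono) auto
  also have "\<dots> = (\<integral>\<^sup>+ z. ennreal (r powr p) * indicator (A \<times> B) z \<partial>\<pi>)"
    using AB by (simp add: nn_integral_cmult_indicator emeasure_eq_measure ennreal_mult)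
  also have "\<dots> \<le> (\<integral>\<^sup>+ z. ennreal (\<bar>fst z - snd z\<bar> powr p) \<partial>\<pi>)"
  proof (rule nn_integral_mono)
    fix z :: "real \<times> real"
    show "ennreal (r powr p) * indicator (A \<times> B) z \<le> ennreal (\<bar>fst z - snd z\<bar> powr p)"
    proof (cases "z \<in> A \<times> B")
      case True
      then have "r \<le> \<bar>fst z - snd z\<bar>" using assms(3) by (auto simp: mem_Times_iff)
      then show ?thesis using True assms(4,5) by (simp add: ennreal_leI powr_mono2)
    qed simp
  qed
  finally show "ennreal (r powr p * (measure \<mu> A - measure \<nu> (- B)))
      \<le> (\<integral>\<^sup>+ z. ennreal (\<bar>fst z - snd z\<bar> powr p) \<partial>\<pi>)" .
qed

lemma Wpp_gauss_ge_far_component: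
  assumes "0 < \<sigma>" "0 < s" "0 \<le> r" "0 \<le> p" "0 \<le> w" "2 * r \<le> \<bar>m - c\<bar>"
    and dominates: "\<And>S. S \<in> sets borel \<Longrightarrow> w * measure (gauss c \<sigma>) S \<le> measure \<mu> S"
  shows "ennreal (r powr p * (w / 2 - exp (- r\<^sup>2 / (2 * s)) / 2)) \<le> Wpp p \<mu> (gauss m s)"
proof -
  interpret \<nu>: prob_space "gauss m s" using assms(2) by (rule prob_space_gauss)
  let ?e = "exp (- r\<^sup>2 / (2 * s)) / 2"
  have half: "w / 2 \<le> measure \<mu> A" if "A \<in> sets borel" "1/2 \<le> measure (gauss c \<sigma>) A" for A
    using dominates[OF that(1)] mult_left_mono[OF that(2) assms(5)] by simp
  obtain A B where AB_borel: "A \<in> sets borel" "B \<in> sets borel"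
    and separated: "\<And>x y. x \<in> A \<Longrightarrow> y \<in> B \<Longrightarrow> r \<le> \<bar>x - y\<bar>"
    and "w / 2 \<le> measure \<mu> A" "measure (gauss m s) (- B) \<le> ?e"
  proof (cases "c \<le> m")
    case True
    have "measure (gauss m s) (- {c + r..}) \<le> measure (gauss m s) {..<m - r}"
      using True assms(6) by (intro \<nu>.finite_measure_mono) auto
    also have "\<dots> \<le> ?e"
      using assms(2,3) by (rule measure_gauss_lower_tail)
    finally show ?thesis
      by (intro that[of "{..c}" "{c + r..}"] half measure_gauss_atMost_center assms(1)) auto
  next
    case False
    have "measure (gauss m s) (- {..c - r}) \<le> measure (gauss m s) {m + r<..}"
      using False assms(6) by (intro \<nu>.finite_measure_mono) auto
    also have "\<dots> \<le> ?e"
      using assms(2,3) by (rule measure_gauss_upper_tail)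
    finally show ?thesis
      by (intro that[of "{c..}" "{..c - r}"] half measure_gauss_atLeast_center assms(1)) auto
  qed
  then have "ennreal (r powr p * (w / 2 - ?e))
      \<le> ennreal (r powr p * (measure \<mu> A - measure (gauss m s) (- B)))"
    by (intro ennreal_leI mult_left_mono) auto
  also have "\<dots> \<le> Wpp p \<mu> (gauss m s)"
    using AB_borel separated assms(3,4) by (rule Wpp_ge_separated_sets)
  finally show ?thesis .
qed

lemma Wpp_gauss_mixture_ge:
  assumes "0 < \<sigma>" "0 < s" "0 \<le> t" "t \<le> 1" "0 \<le> p"
    and "2 * exp (- (\<bar>b - a\<bar> / 4)\<^sup>2 / (2 * s)) \<le> min t (1 - t)"
  shows "ennreal ((\<bar>b - a\<bar> / 4) powr p * (min t (1 - t) / 4))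
           \<le> Wpp p (mixture t (gauss a \<sigma>) (gauss b \<sigma>)) (gauss m s)"
proof -
  define \<mu> where "\<mu> = mixture t (gauss a \<sigma>) (gauss b \<sigma>)"
  define r where "r = \<bar>b - a\<bar> / 4"
  define e where "e = exp (- r\<^sup>2 / (2 * s))"
  have r_le: "2 * r \<le> max \<bar>m - a\<bar> \<bar>m - b\<bar>"
    using abs_triangle_ineq4[of "m - a" "m - b"] by (auto simp: r_def max_def)
  obtain c w where "min t (1 - t) \<le> w" and w: "0 \<le> w" "2 * r \<le> \<bar>m - c\<bar>"
    "\<And>S. S \<in> sets borel \<Longrightarrow> w * measure (gauss c \<sigma>) S \<le> measure \<mu> S"
  proof (cases "\<bar>m - b\<bar> \<le> \<bar>m - a\<bar>")
    case True
    then have "2 * r \<le> \<bar>m - a\<bar>" using r_le by simp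
    moreover have "(1 - t) * measure (gauss a \<sigma>) S \<le> measure \<mu> S" if "S \<in> sets borel" for S
      unfolding \<mu>_def using that assms(1,3,4)
      by (intro measure_mixture_ge_left prob_space_gauss) auto
    ultimately show ?thesis using that[of "1 - t" a] assms(4) by auto
  next
    case False
    then have "2 * r \<le> \<bar>m - b\<bar>" using r_le by simp
    moreover have "t * measure (gauss b \<sigma>) S \<le> measure \<mu> S" if "S \<in> sets borel" for S
      unfolding \<mu>_def using that assms(1,3,4)
      by (intro measure_mixture_ge_right prob_space_gauss) auto
    ultimately show ?thesis using that[of t b] assms(3) by auto
  qed
  then have "r powr p * (min t (1 - t) / 4) \<le> r powr p * (w / 2 - e / 2)"
    using assms(6) by (intro mult_left_mono) (auto simp: e_def r_def)
  then have "ennreal (r powr p * (min t (1 - t) / 4)) \<le> ennreal (r powr p * (w / 2 - e / 2))"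
    by (rule ennreal_leI)
  also have "\<dots> \<le> Wpp p \<mu> (gauss m s)"
    using Wpp_gauss_ge_far_component[OF assms(1,2) _ assms(5) w] by (simp add: r_def e_def)
  finally show ?thesis unfolding r_def \<mu>_def .
qed

theorem lemma3:
  fixes a b \<sigma> t p :: real
  assumes "0 < \<sigma>" "\<sigma> \<le> 1" "0 \<le> t" "t \<le> 1"
    and "min t (1 - t) \<ge> 2 * exp (- (b - a)\<^sup>2 / 32)"
    and "p \<ge> 1"
  shows "(INF m\<in>(UNIV::real set). Wpp p (mixture t (gauss a \<sigma>) (gauss b \<sigma>)) (gauss m 1))
           \<ge> ennreal (min t (1 - t) * \<bar>b - a\<bar> powr p / 4 powr (p + 1))"
proof -
  have "2 * exp (- (\<bar>b - a\<bar> / 4)\<^sup>2 / (2 * 1)) \<le> min t (1 - t)"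
    using assms(5) by (simp add: power_divide)
  then have bound: "ennreal ((\<bar>b - a\<bar> / 4) powr p * (min t (1 - t) / 4))
      \<le> Wpp p (mixture t (gauss a \<sigma>) (gauss b \<sigma>)) (gauss m 1)" for m
    using assms(1,3,4,6) by (intro Wpp_gauss_mixture_ge) auto
  have target: "min t (1 - t) * \<bar>b - a\<bar> powr p / 4 powr (p + 1)
      = (\<bar>b - a\<bar> / 4) powr p * (min t (1 - t) / 4)"
    by (simp add: powr_divide powr_add)
  show ?thesis
    unfolding target by (rule INF_greatest) (rule bound)
qed

end
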